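(* Let $\mathbb{C}$ be a pointed category with binary products. For objects $A,B$ write $\pi_1\colon A\times B\to A$, $\pi_2\colon A\times B\to B$ for the product projections, $\iota_1=(1_A,0)\colon A\to A\times B$ and $\iota_2=(0,1_B)\colon B\to A\times B$, and for morphisms $u\colon X\to A$, $v\colon X\to B$ write $(u,v)\colon X\to A\times B$ for the induced morphism; $0$ denotes a zero morphism. The following conditions are equivalent: (a) for all objects $A,B,C$ and every morphism $f\colon A\times B\to C$: if $f\circ\iota_1=0$ then $f=f\circ\iota_2\circ\pi_2$ (equivalently, $\pi_2\colon A\times B\to B$ is a cokernel of $\iota_1\colon A\to A\times B$); (b) for all objects $X,Y$ and every morphism $f\colon X\times X\to Y$: if $f\circ\iota_1=0$ then $f=f\circ\iota_2\circ\pi_2$ (equivalently, $\pi_2\colon X\times X\to X$ is a cokernel of $\iota_1=(1_X,0)\colon X\to X\times X$); (c) for all objects $X,Y$ and every morphism $f\colon X\times X\to Y$: if $f\circ(1_X,0)=0$ then $f\circ(1_X,1_X)=f\circ(0,1_X)$; (d) for all objects $A,B,C,X$ and all morphisms $f\colon A\times B\to C$, $a\colon X\to A$, $b\colon X\to B$: if $f\circ(a,0)=0$ then $f\circ(a,b)=f\circ(0,b)$; (e) for all objects $X,Y,U$ and all morphisms $f\colon X\times X\to Y$, $x\colon U\to X$: if $f\circ(x,0)=0$ then $f\circ(x,x)=f\circ(0,x)$.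
   Context: A pointed category is one with a zero object; $0$ denotes the zero morphism between any two objects. *)

theory Defs
  imports Main
begin

text \<open>Categories given by objects, arrows, domain, codomain, composition and identities.
  Comp C g f denotes g after f.\<close>

record ('o, 'm) cat =
  Obj :: "'o set"
  Arr :: "'m set"
  Dom :: "'m \<Rightarrow> 'o"
  Cod :: "'m \<Rightarrow> 'o"
  Comp :: "'m \<Rightarrow> 'm \<Rightarrow> 'm"
  Id :: "'o \<Rightarrow> 'm"

definition hom :: "('o, 'm) cat \<Rightarrow> 'o \<Rightarrow> 'o \<Rightarrow> 'm set" where
  "hom C A B = {f \<in> Arr C. Dom C f = A \<and> Cod C f = B}"

definition category :: "('o, 'm) cat \<Rightarrow> bool" where
  "category C \<longleftrightarrow>
     (\<forall>f \<in> Arr C. Dom C f \<in> Obj C \<and> Cod C f \<in> Obj C) \<and>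
     (\<forall>A \<in> Obj C. Id C A \<in> hom C A A) \<and>
     (\<forall>f \<in> Arr C. \<forall>g \<in> Arr C. Cod C f = Dom C g \<longrightarrow>
        Comp C g f \<in> hom C (Dom C f) (Cod C g)) \<and>
     (\<forall>f \<in> Arr C. \<forall>g \<in> Arr C. \<forall>h \<in> Arr C. Cod C f = Dom C g \<longrightarrow> Cod C g = Dom C h \<longrightarrow>
        Comp C h (Comp C g f) = Comp C (Comp C h g) f) \<and>
     (\<forall>f \<in> Arr C. Comp C f (Id C (Dom C f)) = f \<and> Comp C (Id C (Cod C f)) f = f)"

definition zero_object :: "('o, 'm) cat \<Rightarrow> 'o \<Rightarrow> bool" where
  "zero_object C Z \<longleftrightarrow> Z \<in> Obj C \<and>
     (\<forall>A \<in> Obj C. (\<exists>!f. f \<in> hom C A Z) \<and> (\<exists>!g. g \<in> hom C Z A))"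

definition pointed_category :: "('o, 'm) cat \<Rightarrow> bool" where
  "pointed_category C \<longleftrightarrow> category C \<and> (\<exists>Z. zero_object C Z)"

definition zmor :: "('o, 'm) cat \<Rightarrow> 'o \<Rightarrow> 'o \<Rightarrow> 'm" where
  "zmor C A B = (let Z = (SOME Z. zero_object C Z)
     in Comp C (THE g. g \<in> hom C Z B) (THE f. f \<in> hom C A Z))"

record ('o, 'm) products =
  Pr :: "'o \<Rightarrow> 'o \<Rightarrow> 'o"
  Pi1 :: "'o \<Rightarrow> 'o \<Rightarrow> 'm"
  Pi2 :: "'o \<Rightarrow> 'o \<Rightarrow> 'm"

definition is_product :: "('o, 'm) cat \<Rightarrow> 'o \<Rightarrow> 'o \<Rightarrow> 'o \<Rightarrow> 'm \<Rightarrow> 'm \<Rightarrow> bool" where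
  "is_product C A B P p q \<longleftrightarrow> P \<in> Obj C \<and> p \<in> hom C P A \<and> q \<in> hom C P B \<and>
     (\<forall>X \<in> Obj C. \<forall>u \<in> hom C X A. \<forall>v \<in> hom C X B.
        \<exists>!h. h \<in> hom C X P \<and> Comp C p h = u \<and> Comp C q h = v)"

definition has_binary_products :: "('o, 'm) cat \<Rightarrow> ('o, 'm) products \<Rightarrow> bool" where
  "has_binary_products C P \<longleftrightarrow>
     (\<forall>A \<in> Obj C. \<forall>B \<in> Obj C. is_product C A B (Pr P A B) (Pi1 P A B) (Pi2 P A B))"

definition pair :: "('o, 'm) cat \<Rightarrow> ('o, 'm) products \<Rightarrow> 'o \<Rightarrow> 'o \<Rightarrow> 'o \<Rightarrow> 'm \<Rightarrow> 'm \<Rightarrow> 'm" where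
  "pair C P X A B u v = (THE h. h \<in> hom C X (Pr P A B) \<and>
     Comp C (Pi1 P A B) h = u \<and> Comp C (Pi2 P A B) h = v)"

definition iota1 :: "('o, 'm) cat \<Rightarrow> ('o, 'm) products \<Rightarrow> 'o \<Rightarrow> 'o \<Rightarrow> 'm" where
  "iota1 C P A B = pair C P A A B (Id C A) (zmor C A B)"

definition iota2 :: "('o, 'm) cat \<Rightarrow> ('o, 'm) products \<Rightarrow> 'o \<Rightarrow> 'o \<Rightarrow> 'm" where
  "iota2 C P A B = pair C P B A B (zmor C B A) (Id C B)"

definition cond_a :: "('o, 'm) cat \<Rightarrow> ('o, 'm) products \<Rightarrow> bool" where
  "cond_a C P \<longleftrightarrow> (\<forall>A \<in> Obj C. \<forall>B \<in> Obj C. \<forall>D \<in> Obj C. \<forall>f \<in> hom C (Pr P A B) D.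
     Comp C f (iota1 C P A B) = zmor C A D \<longrightarrow>
     f = Comp C f (Comp C (iota2 C P A B) (Pi2 P A B)))"

definition cond_b :: "('o, 'm) cat \<Rightarrow> ('o, 'm) products \<Rightarrow> bool" where
  "cond_b C P \<longleftrightarrow> (\<forall>X \<in> Obj C. \<forall>Y \<in> Obj C. \<forall>f \<in> hom C (Pr P X X) Y.
     Comp C f (iota1 C P X X) = zmor C X Y \<longrightarrow>
     f = Comp C f (Comp C (iota2 C P X X) (Pi2 P X X)))"

definition cond_c :: "('o, 'm) cat \<Rightarrow> ('o, 'm) products \<Rightarrow> bool" where
  "cond_c C P \<longleftrightarrow> (\<forall>X \<in> Obj C. \<forall>Y \<in> Obj C. \<forall>f \<in> hom C (Pr P X X) Y.
     Comp C f (pair C P X X X (Id C X) (zmor C X X)) = zmor C X Y \<longrightarrow>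
     Comp C f (pair C P X X X (Id C X) (Id C X)) = Comp C f (pair C P X X X (zmor C X X) (Id C X)))"

definition cond_d :: "('o, 'm) cat \<Rightarrow> ('o, 'm) products \<Rightarrow> bool" where
  "cond_d C P \<longleftrightarrow> (\<forall>A \<in> Obj C. \<forall>B \<in> Obj C. \<forall>D \<in> Obj C. \<forall>X \<in> Obj C.
     \<forall>f \<in> hom C (Pr P A B) D. \<forall>a \<in> hom C X A. \<forall>b \<in> hom C X B.
     Comp C f (pair C P X A B a (zmor C X B)) = zmor C X D \<longrightarrow>
     Comp C f (pair C P X A B a b) = Comp C f (pair C P X A B (zmor C X A) b))"

definition cond_e :: "('o, 'm) cat \<Rightarrow> ('o, 'm) products \<Rightarrow> bool" where
  "cond_e C P \<longleftrightarrow> (\<forall>X \<in> Obj C. \<forall>Y \<in> Obj C. \<forall>U \<in> Obj C.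
     \<forall>f \<in> hom C (Pr P X X) Y. \<forall>x \<in> hom C U X.
     Comp C f (pair C P U X X x (zmor C U X)) = zmor C U Y \<longrightarrow>
     Comp C f (pair C P U X X x x) = Comp C f (pair C P U X X (zmor C U X) x))"

end

theory Submission
  imports Defs
begin

(* (a) implies (b) and (d) implies (e) by specialisation; (b) implies (c) by precomposing
   f = f \<iota>\<^sub>2 \<pi>\<^sub>2 with the diagonal (1,1); (e) implies (c) with x = 1.
   For (c) implies (d), apply (c) to g = f (a \<times> b) : X \<times> X \<rightarrow> D, for which
   g (u,v) = f (a u, b v). For (d) implies (a), apply (d) to the projections of X = A \<times> B,
   using (\<pi>\<^sub>1,\<pi>\<^sub>2) = 1, (\<pi>\<^sub>1,0) = \<iota>\<^sub>1 \<pi>\<^sub>1 and (0,\<pi>\<^sub>2) = \<iota>\<^sub>2 \<pi>\<^sub>2. *)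

lemma cond_a_imp_cond_b: "cond_a C P \<Longrightarrow> cond_b C P"
  unfolding cond_a_def cond_b_def by blast

lemma cond_d_imp_cond_e: "cond_d C P \<Longrightarrow> cond_e C P"
  unfolding cond_d_def cond_e_def by blast

locale categ =
  fixes C :: "('o, 'm) cat"
  assumes category: "category C"
begin

abbreviation arr_comp :: "'m \<Rightarrow> 'm \<Rightarrow> 'm"  (infixr \<open>\<cdot>\<close> 55)
  where "g \<cdot> f \<equiv> Comp C g f"

lemma hom_objs: "f \<in> hom C A B \<Longrightarrow> A \<in> Obj C \<and> B \<in> Obj C"
  using category unfolding category_def hom_def by blast

lemma comp_in_hom: "f \<in> hom C A B \<Longrightarrow> g \<in> hom C B D \<Longrightarrow> g \<cdot> f \<in> hom C A D"
  using category unfolding category_def hom_def by auto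

lemma comp_assoc:
  "f \<in> hom C A B \<Longrightarrow> g \<in> hom C B D \<Longrightarrow> h \<in> hom C D E \<Longrightarrow> h \<cdot> (g \<cdot> f) = (h \<cdot> g) \<cdot> f"
  using category unfolding category_def hom_def by auto

lemma id_in_hom: "A \<in> Obj C \<Longrightarrow> Id C A \<in> hom C A A"
  using category unfolding category_def by blast

lemma comp_id: "f \<in> hom C A B \<Longrightarrow> f \<cdot> Id C A = f"
  using category unfolding category_def hom_def by auto

lemma id_comp: "f \<in> hom C A B \<Longrightarrow> Id C B \<cdot> f = f"
  using category unfolding category_def hom_def by auto

lemma cond_e_imp_cond_c: "cond_e C P \<Longrightarrow> cond_c C P"
  unfolding cond_e_def cond_c_def using id_in_hom by blast

end

locale pointed_categ = categ C for C :: "('o, 'm) cat" +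
  assumes has_zero_object: "\<exists>Z. zero_object C Z"
begin

definition zero_obj :: 'o where
  "zero_obj = (SOME Z. zero_object C Z)"

definition to_zero :: "'o \<Rightarrow> 'm" where
  "to_zero A = (THE f. f \<in> hom C A zero_obj)"

definition from_zero :: "'o \<Rightarrow> 'm" where
  "from_zero B = (THE g. g \<in> hom C zero_obj B)"

lemma zero_object_zero_obj: "zero_object C zero_obj"
  unfolding zero_obj_def using has_zero_object by (rule someI_ex)

lemma ex1_hom_to_zero_obj: "A \<in> Obj C \<Longrightarrow> \<exists>!f. f \<in> hom C A zero_obj"
  using zero_object_zero_obj unfolding zero_object_def by blast

lemma ex1_hom_from_zero_obj: "B \<in> Obj C \<Longrightarrow> \<exists>!g. g \<in> hom C zero_obj B"
  using zero_object_zero_obj unfolding zero_object_def by blast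

lemma to_zero_in_hom: "A \<in> Obj C \<Longrightarrow> to_zero A \<in> hom C A zero_obj"
  unfolding to_zero_def by (rule theI'[OF ex1_hom_to_zero_obj])

lemma to_zero_unique: "f \<in> hom C A zero_obj \<Longrightarrow> to_zero A = f"
  unfolding to_zero_def using ex1_hom_to_zero_obj hom_objs by (blast intro: the1_equality)

lemma from_zero_in_hom: "B \<in> Obj C \<Longrightarrow> from_zero B \<in> hom C zero_obj B"
  unfolding from_zero_def by (rule theI'[OF ex1_hom_from_zero_obj])

lemma from_zero_unique: "g \<in> hom C zero_obj B \<Longrightarrow> from_zero B = g"
  unfolding from_zero_def using ex1_hom_from_zero_obj hom_objs by (blast intro: the1_equality)

lemma zmor_eq: "zmor C A B = from_zero B \<cdot> to_zero A"
  unfolding zmor_def zero_obj_def to_zero_def from_zero_def Let_def ..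

lemma zmor_in_hom: "A \<in> Obj C \<Longrightarrow> B \<in> Obj C \<Longrightarrow> zmor C A B \<in> hom C A B"
  unfolding zmor_eq by (rule comp_in_hom[OF to_zero_in_hom from_zero_in_hom])

lemma zmor_comp:
  assumes h: "h \<in> hom C X A" and B: "B \<in> Obj C"
  shows "zmor C A B \<cdot> h = zmor C X B"
proof -
  have A: "A \<in> Obj C" using h hom_objs by blast
  have "zmor C A B \<cdot> h = from_zero B \<cdot> (to_zero A \<cdot> h)"
    unfolding zmor_eq using comp_assoc[OF h to_zero_in_hom[OF A] from_zero_in_hom[OF B]] by simp
  also have "to_zero A \<cdot> h = to_zero X"
    using to_zero_unique[OF comp_in_hom[OF h to_zero_in_hom[OF A]]] by simp
  finally show ?thesis unfolding zmor_eq .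
qed

lemma comp_zmor:
  assumes g: "g \<in> hom C B D" and A: "A \<in> Obj C"
  shows "g \<cdot> zmor C A B = zmor C A D"
proof -
  have B: "B \<in> Obj C" using g hom_objs by blast
  have "g \<cdot> zmor C A B = (g \<cdot> from_zero B) \<cdot> to_zero A"
    unfolding zmor_eq using comp_assoc[OF to_zero_in_hom[OF A] from_zero_in_hom[OF B] g] by simp
  also have "g \<cdot> from_zero B = from_zero D"
    using from_zero_unique[OF comp_in_hom[OF from_zero_in_hom[OF B] g]] by simp
  finally show ?thesis unfolding zmor_eq .
qed

end

locale categ_with_products = categ C for C :: "('o, 'm) cat" +
  fixes P :: "('o, 'm) products"
  assumes has_products: "has_binary_products C P"
begin

lemma is_product_Pr:
  "A \<in> Obj C \<Longrightarrow> B \<in> Obj C \<Longrightarrow> is_product C A B (Pr P A B) (Pi1 P A B) (Pi2 P A B)"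
  using has_products unfolding has_binary_products_def by blast

lemma Pr_in_Obj: "A \<in> Obj C \<Longrightarrow> B \<in> Obj C \<Longrightarrow> Pr P A B \<in> Obj C"
  using is_product_Pr unfolding is_product_def by blast

lemma Pi1_in_hom: "A \<in> Obj C \<Longrightarrow> B \<in> Obj C \<Longrightarrow> Pi1 P A B \<in> hom C (Pr P A B) A"
  using is_product_Pr unfolding is_product_def by blast

lemma Pi2_in_hom: "A \<in> Obj C \<Longrightarrow> B \<in> Obj C \<Longrightarrow> Pi2 P A B \<in> hom C (Pr P A B) B"
  using is_product_Pr unfolding is_product_def by blast

lemma pair_unique:
  assumes "u \<in> hom C X A" and "v \<in> hom C X B"
  shows "\<exists>!h. h \<in> hom C X (Pr P A B) \<and> Pi1 P A B \<cdot> h = u \<and> Pi2 P A B \<cdot> h = v"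
proof -
  have "X \<in> Obj C" "A \<in> Obj C" "B \<in> Obj C" using assms hom_objs by auto
  with assms show ?thesis using is_product_Pr[of A B] unfolding is_product_def by blast
qed

lemma pair_in_hom_and_projections:
  assumes "u \<in> hom C X A" and "v \<in> hom C X B"
  shows "pair C P X A B u v \<in> hom C X (Pr P A B) \<and>
    Pi1 P A B \<cdot> pair C P X A B u v = u \<and> Pi2 P A B \<cdot> pair C P X A B u v = v"
  unfolding pair_def using pair_unique[OF assms] by (rule theI')

lemma pair_in_hom:
  "u \<in> hom C X A \<Longrightarrow> v \<in> hom C X B \<Longrightarrow> pair C P X A B u v \<in> hom C X (Pr P A B)"
  using pair_in_hom_and_projections by blast

lemma Pi1_pair: "u \<in> hom C X A \<Longrightarrow> v \<in> hom C X B \<Longrightarrow> Pi1 P A B \<cdot> pair C P X A B u v = u"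
  using pair_in_hom_and_projections by blast

lemma Pi2_pair: "u \<in> hom C X A \<Longrightarrow> v \<in> hom C X B \<Longrightarrow> Pi2 P A B \<cdot> pair C P X A B u v = v"
  using pair_in_hom_and_projections by blast

lemma pair_eta:
  assumes h: "h \<in> hom C X (Pr P A B)" and A: "A \<in> Obj C" and B: "B \<in> Obj C"
  shows "pair C P X A B (Pi1 P A B \<cdot> h) (Pi2 P A B \<cdot> h) = h"
proof -
  have "Pi1 P A B \<cdot> h \<in> hom C X A" "Pi2 P A B \<cdot> h \<in> hom C X B"
    using comp_in_hom[OF h Pi1_in_hom[OF A B]] comp_in_hom[OF h Pi2_in_hom[OF A B]] by auto
  from pair_unique[OF this] show ?thesis
    unfolding pair_def using h by (simp add: the1_equality)
qed

lemma pair_Pi1_Pi2: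
  "A \<in> Obj C \<Longrightarrow> B \<in> Obj C \<Longrightarrow> pair C P (Pr P A B) A B (Pi1 P A B) (Pi2 P A B) = Id C (Pr P A B)"
  using pair_eta[OF id_in_hom[OF Pr_in_Obj]] comp_id Pi1_in_hom Pi2_in_hom by metis

lemma pair_comp:
  assumes u: "u \<in> hom C X A" and v: "v \<in> hom C X B" and h: "h \<in> hom C Y X"
  shows "pair C P X A B u v \<cdot> h = pair C P Y A B (u \<cdot> h) (v \<cdot> h)"
proof -
  have A: "A \<in> Obj C" and B: "B \<in> Obj C" using u v hom_objs by auto
  have uv: "pair C P X A B u v \<in> hom C X (Pr P A B)" using pair_in_hom[OF u v] .
  have "Pi1 P A B \<cdot> (pair C P X A B u v \<cdot> h) = u \<cdot> h"
    using comp_assoc[OF h uv Pi1_in_hom[OF A B]] Pi1_pair[OF u v] by simp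
  moreover have "Pi2 P A B \<cdot> (pair C P X A B u v \<cdot> h) = v \<cdot> h"
    using comp_assoc[OF h uv Pi2_in_hom[OF A B]] Pi2_pair[OF u v] by simp
  ultimately show ?thesis using pair_eta[OF comp_in_hom[OF h uv] A B] by simp
qed

definition prod_map :: "'o \<Rightarrow> 'o \<Rightarrow> 'o \<Rightarrow> 'o \<Rightarrow> 'm \<Rightarrow> 'm \<Rightarrow> 'm" where
  "prod_map X Y A B a b = pair C P (Pr P X Y) A B (a \<cdot> Pi1 P X Y) (b \<cdot> Pi2 P X Y)"

lemma prod_map_comp_pair:
  assumes a: "a \<in> hom C X A" and b: "b \<in> hom C Y B"
    and u: "u \<in> hom C U X" and v: "v \<in> hom C U Y"
  shows "prod_map X Y A B a b \<cdot> pair C P U X Y u v = pair C P U A B (a \<cdot> u) (b \<cdot> v)"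
proof -
  have X: "X \<in> Obj C" and Y: "Y \<in> Obj C" using a b hom_objs by auto
  have p1: "Pi1 P X Y \<in> hom C (Pr P X Y) X" and p2: "Pi2 P X Y \<in> hom C (Pr P X Y) Y"
    using Pi1_in_hom[OF X Y] Pi2_in_hom[OF X Y] .
  have uv: "pair C P U X Y u v \<in> hom C U (Pr P X Y)" using pair_in_hom[OF u v] .
  have "prod_map X Y A B a b \<cdot> pair C P U X Y u v =
      pair C P U A B ((a \<cdot> Pi1 P X Y) \<cdot> pair C P U X Y u v) ((b \<cdot> Pi2 P X Y) \<cdot> pair C P U X Y u v)"
    unfolding prod_map_def using pair_comp[OF comp_in_hom[OF p1 a] comp_in_hom[OF p2 b] uv] .
  also have "(a \<cdot> Pi1 P X Y) \<cdot> pair C P U X Y u v = a \<cdot> u"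
    using comp_assoc[OF uv p1 a] Pi1_pair[OF u v] by simp
  also have "(b \<cdot> Pi2 P X Y) \<cdot> pair C P U X Y u v = b \<cdot> v"
    using comp_assoc[OF uv p2 b] Pi2_pair[OF u v] by simp
  finally show ?thesis .
qed

lemma prod_map_in_hom:
  "a \<in> hom C X A \<Longrightarrow> b \<in> hom C Y B \<Longrightarrow> prod_map X Y A B a b \<in> hom C (Pr P X Y) (Pr P A B)"
  unfolding prod_map_def
  by (meson Pi1_in_hom Pi2_in_hom comp_in_hom hom_objs pair_in_hom)

end

locale pointed_categ_with_products = pointed_categ C + categ_with_products C P
  for C :: "('o, 'm) cat" and P :: "('o, 'm) products"
begin

lemma iota1_in_hom: "A \<in> Obj C \<Longrightarrow> B \<in> Obj C \<Longrightarrow> iota1 C P A B \<in> hom C A (Pr P A B)"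
  unfolding iota1_def by (simp add: id_in_hom pair_in_hom zmor_in_hom)

lemma iota2_in_hom: "A \<in> Obj C \<Longrightarrow> B \<in> Obj C \<Longrightarrow> iota2 C P A B \<in> hom C B (Pr P A B)"
  unfolding iota2_def by (simp add: id_in_hom pair_in_hom zmor_in_hom)

lemma iota1_comp_Pi1:
  assumes A: "A \<in> Obj C" and B: "B \<in> Obj C"
  shows "iota1 C P A B \<cdot> Pi1 P A B = pair C P (Pr P A B) A B (Pi1 P A B) (zmor C (Pr P A B) B)"
  using pair_comp[OF id_in_hom[OF A] zmor_in_hom[OF A B] Pi1_in_hom[OF A B]]
    id_comp[OF Pi1_in_hom[OF A B]] zmor_comp[OF Pi1_in_hom[OF A B] B]
  unfolding iota1_def by simp

lemma iota2_comp_Pi2: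
  assumes A: "A \<in> Obj C" and B: "B \<in> Obj C"
  shows "iota2 C P A B \<cdot> Pi2 P A B = pair C P (Pr P A B) A B (zmor C (Pr P A B) A) (Pi2 P A B)"
  using pair_comp[OF zmor_in_hom[OF B A] id_in_hom[OF B] Pi2_in_hom[OF A B]]
    id_comp[OF Pi2_in_hom[OF A B]] zmor_comp[OF Pi2_in_hom[OF A B] A]
  unfolding iota2_def by simp

lemma cond_b_imp_cond_c: "cond_b C P \<Longrightarrow> cond_c C P"
  unfolding cond_c_def
proof (intro ballI impI)
  fix X Y f
  assume b: "cond_b C P" and X: "X \<in> Obj C" and Y: "Y \<in> Obj C" and f: "f \<in> hom C (Pr P X X) Y"
    and f_iota1: "f \<cdot> pair C P X X X (Id C X) (zmor C X X) = zmor C X Y"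
  have 1: "Id C X \<in> hom C X X" using id_in_hom[OF X] .
  have diag: "pair C P X X X (Id C X) (Id C X) \<in> hom C X (Pr P X X)" using pair_in_hom[OF 1 1] .
  have i2: "iota2 C P X X \<in> hom C X (Pr P X X)" using iota2_in_hom[OF X X] .
  have p2: "Pi2 P X X \<in> hom C (Pr P X X) X" using Pi2_in_hom[OF X X] .
  have "f \<cdot> pair C P X X X (Id C X) (Id C X)
      = (f \<cdot> (iota2 C P X X \<cdot> Pi2 P X X)) \<cdot> pair C P X X X (Id C X) (Id C X)"
    using b X Y f f_iota1 unfolding cond_b_def iota1_def by auto
  also have "\<dots> = f \<cdot> iota2 C P X X \<cdot> Pi2 P X X \<cdot> pair C P X X X (Id C X) (Id C X)"
    using comp_assoc[OF diag comp_in_hom[OF p2 i2] f] comp_assoc[OF diag p2 i2] by simp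
  also have "\<dots> = f \<cdot> iota2 C P X X"
    using Pi2_pair[OF 1 1] comp_id[OF i2] by simp
  finally show "f \<cdot> pair C P X X X (Id C X) (Id C X) = f \<cdot> pair C P X X X (zmor C X X) (Id C X)"
    unfolding iota2_def .
qed

lemma cond_c_imp_cond_d: "cond_c C P \<Longrightarrow> cond_d C P"
  unfolding cond_d_def
proof (intro ballI impI)
  fix A B D X f a b
  assume c: "cond_c C P" and "A \<in> Obj C" "B \<in> Obj C" and D: "D \<in> Obj C" and X: "X \<in> Obj C"
    and f: "f \<in> hom C (Pr P A B) D" and a: "a \<in> hom C X A" and b: "b \<in> hom C X B"
    and f_a0: "f \<cdot> pair C P X A B a (zmor C X B) = zmor C X D"
  define g where "g = f \<cdot> prod_map X X A B a b"
  have g: "g \<in> hom C (Pr P X X) D"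
    unfolding g_def using comp_in_hom[OF prod_map_in_hom[OF a b] f] .
  have g_pair: "g \<cdot> pair C P X X X u v = f \<cdot> pair C P X A B (a \<cdot> u) (b \<cdot> v)"
    if u: "u \<in> hom C X X" and v: "v \<in> hom C X X" for u v
    unfolding g_def
    using comp_assoc[OF pair_in_hom[OF u v] prod_map_in_hom[OF a b] f] prod_map_comp_pair[OF a b u v]
    by simp
  have 1: "Id C X \<in> hom C X X" and 0: "zmor C X X \<in> hom C X X"
    using id_in_hom[OF X] zmor_in_hom[OF X X] by auto
  have "g \<cdot> pair C P X X X (Id C X) (zmor C X X) = zmor C X D"
    using g_pair[OF 1 0] comp_id[OF a] comp_zmor[OF b X] f_a0 by simp
  then have "g \<cdot> pair C P X X X (Id C X) (Id C X) = g \<cdot> pair C P X X X (zmor C X X) (Id C X)"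
    using c X D g unfolding cond_c_def by blast
  then show "f \<cdot> pair C P X A B a b = f \<cdot> pair C P X A B (zmor C X A) b"
    using g_pair[OF 1 1] g_pair[OF 0 1] comp_id[OF a] comp_id[OF b] comp_zmor[OF a X] by simp
qed

lemma cond_d_imp_cond_a: "cond_d C P \<Longrightarrow> cond_a C P"
  unfolding cond_a_def
proof (intro ballI impI)
  fix A B D f
  assume d: "cond_d C P" and A: "A \<in> Obj C" and B: "B \<in> Obj C" and D: "D \<in> Obj C"
    and f: "f \<in> hom C (Pr P A B) D" and f_iota1: "f \<cdot> iota1 C P A B = zmor C A D"
  have p1: "Pi1 P A B \<in> hom C (Pr P A B) A" and p2: "Pi2 P A B \<in> hom C (Pr P A B) B"
    using Pi1_in_hom[OF A B] Pi2_in_hom[OF A B] .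
  have i1: "iota1 C P A B \<in> hom C A (Pr P A B)" using iota1_in_hom[OF A B] .
  have "f \<cdot> pair C P (Pr P A B) A B (Pi1 P A B) (zmor C (Pr P A B) B) = (f \<cdot> iota1 C P A B) \<cdot> Pi1 P A B"
    using iota1_comp_Pi1[OF A B] comp_assoc[OF p1 i1 f] by simp
  also have "\<dots> = zmor C (Pr P A B) D"
    using f_iota1 zmor_comp[OF p1 D] by simp
  finally have "f \<cdot> pair C P (Pr P A B) A B (Pi1 P A B) (Pi2 P A B) =
      f \<cdot> pair C P (Pr P A B) A B (zmor C (Pr P A B) A) (Pi2 P A B)"
    using d A B D f p1 p2 Pr_in_Obj[OF A B] unfolding cond_d_def by blast
  then show "f = f \<cdot> iota2 C P A B \<cdot> Pi2 P A B"
    using pair_Pi1_Pi2[OF A B] comp_id[OF f] iota2_comp_Pi2[OF A B] by simp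
qed

end

theorem theorem1p2:
  fixes C :: "('o, 'm) cat" and P :: "('o, 'm) products"
  assumes "pointed_category C"
    and "has_binary_products C P"
  shows "(cond_a C P \<longleftrightarrow> cond_b C P) \<and> (cond_b C P \<longleftrightarrow> cond_c C P) \<and>
         (cond_c C P \<longleftrightarrow> cond_d C P) \<and> (cond_d C P \<longleftrightarrow> cond_e C P)"
proof -
  interpret pointed_categ_with_products C P
    using assms unfolding pointed_category_def by unfold_locales auto
  show ?thesis
    using cond_a_imp_cond_b cond_b_imp_cond_c cond_c_imp_cond_d cond_d_imp_cond_a
      cond_d_imp_cond_e cond_e_imp_cond_c
    by blast
qed

end
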